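(* Assume the negation of the Continuum Hypothesis. Then the Banach space $\ell_\infty$ has no overcomplete set.
   Context: A subset $S$ of a Banach space $X$ with $|S| = \operatorname{dens} X$ (density character) is called overcomplete if every subset $\Lambda \subseteq S$ with $|\Lambda| = |S|$ is linearly dense in $X$. *)

theory Defs
  imports "HOL-Analysis.Analysis" "HOL-Library.Equipollence"
begin

definition CH :: bool where
  "CH \<longleftrightarrow> (\<forall>A :: real set. countable A \<or> A \<approx> (UNIV :: real set))"

text \<open>The cardinality of S equals the density character of the whole space:
  S is equipotent to some dense subset, and S injects into every dense subset.\<close>
definition card_eq_dens :: "'a::real_normed_vector set \<Rightarrow> bool" where
  "card_eq_dens S \<longleftrightarrow>
     (\<exists>D::'a set. closure D = UNIV \<and> S \<approx> D) \<and> (\<forall>D::'a set. closure D = UNIV \<longrightarrow> S \<lesssim> D)"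

definition overcomplete :: "'a::real_normed_vector set \<Rightarrow> bool" where
  "overcomplete S \<longleftrightarrow> card_eq_dens S \<and>
     (\<forall>\<Lambda>. \<Lambda> \<subseteq> S \<and> \<Lambda> \<approx> S \<longrightarrow> closure (span \<Lambda>) = UNIV)"

(* l_infinity is modelled as the type of bounded (automatically continuous) real
  sequences nat =>_C real with the sup norm. *)

end

(* Under the negation of CH the interval (0, pi) has more than aleph1 points.  For t in (0, pi)
   let cos_coeff t x be the mean of x n * cos (t n), where the mean is an ultrafilter limit of
   Cesaro averages.  The sequences cos (t n) are orthogonal for this mean, so by Bessel's
   inequality every x has only countably many nonzero coefficients, while the coefficient of
   cos (t n) itself is 1/2.  A cardinal argument then yields a t for which cos_coeff t vanishes on
   a subset of S equipotent to S; that subset lies in a closed hyperplane and so is not linearly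
   dense. *)

theory Submission
  imports Defs "HOL-Library.Countable_Set_Type"
begin

unbundle cardinal_syntax

section \<open>Sets of size at most aleph1\<close>

abbreviation aleph1 :: "nat set rel" where
  "aleph1 \<equiv> cardSuc natLeq"

lemma Card_order_aleph1: "Card_order aleph1"
  by (simp add: cardSuc_Card_order natLeq_Card_order)

lemma infinite_Field_aleph1: "\<not> finite (Field aleph1)"
  using cardSuc_finite natLeq_Cinfinite by (auto simp: cinfinite_def)

lemma countable_iff_ordLess_aleph1: "countable A \<longleftrightarrow> |A| <o aleph1"
  by (simp add: countable_card_le_natLeq
      cardSuc_ordLeq_ordLess[OF natLeq_Card_order card_of_Card_order])

lemma uncountable_iff_aleph1_ordLeq: "\<not> countable A \<longleftrightarrow> aleph1 \<le>o |A|"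
  using not_ordLess_iff_ordLeq[OF cardSuc_Well_order[OF natLeq_Card_order] card_of_Well_order]
  by (simp add: countable_iff_ordLess_aleph1)

lemma ex_uncountable_subset_ordLeq_aleph1:
  assumes "\<not> countable A"
  obtains B where "B \<subseteq> A" "\<not> countable B" "|B| \<le>o aleph1"
proof -
  have "|Field aleph1| \<le>o |A|"
    using assms card_of_Field_ordIso[OF Card_order_aleph1]
    by (simp add: uncountable_iff_aleph1_ordLeq ordIso_ordLeq_trans)
  then obtain B where "B \<subseteq> A" and "|Field aleph1| =o |B|"
    by (auto simp: internalize_card_of_ordLeq2[of "Field aleph1"])
  then have "|B| =o aleph1"
    by (meson card_of_Field_ordIso[OF Card_order_aleph1] ordIso_symmetric ordIso_transitive)
  then show thesis
    using that[OF \<open>B \<subseteq> A\<close>] ordIso_iff_ordLeq uncountable_iff_aleph1_ordLeq by blast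
qed

lemma card_of_UN_ordLeq_aleph1:
  "|I| \<le>o aleph1 \<Longrightarrow> (\<And>i. i \<in> I \<Longrightarrow> |A i| \<le>o aleph1) \<Longrightarrow> |\<Union>i\<in>I. A i| \<le>o aleph1"
  using card_of_UNION_ordLeq_infinite_Field[OF infinite_Field_aleph1 Card_order_aleph1] by blast

lemma card_of_ordLeq_aleph1_if_countable_lower_sets:
  assumes total: "\<And>x y. x \<in> T \<Longrightarrow> y \<in> T \<Longrightarrow> R x y \<or> R y x"
    and lower: "\<And>y. y \<in> T \<Longrightarrow> countable {x\<in>T. R x y}"
  shows "|T| \<le>o aleph1"
proof (cases "countable T")
  case True
  then show ?thesis
    using countable_iff_ordLess_aleph1 ordLess_imp_ordLeq by blast
next
  case False
  then obtain B where B: "B \<subseteq> T" "\<not> countable B" "|B| \<le>o aleph1"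
    by (rule ex_uncountable_subset_ordLeq_aleph1)
  have unbounded: "\<exists>x\<in>B. \<not> R x y" if "y \<in> T" for y
    using lower[OF that] B countable_subset[of B "{x\<in>T. R x y}"] by blast
  have "T \<subseteq> (\<Union>x\<in>B. {y\<in>T. R y x})"
    using unbounded total B(1) by blast
  moreover have "|\<Union>x\<in>B. {y\<in>T. R y x}| \<le>o aleph1"
  proof (rule card_of_UN_ordLeq_aleph1)
    show "|B| \<le>o aleph1"
      by (fact B(3))
    show "|{y\<in>T. R y x}| \<le>o aleph1" if "x \<in> B" for x
      using lower[of x] that B(1) countable_iff_ordLess_aleph1 ordLess_imp_ordLeq by blast
  qed
  ultimately show ?thesis
    using card_of_mono1 ordLeq_transitive by blast
qed

lemma ex_point_avoided_by_all_if_card_ordLeq_aleph1: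
  assumes "aleph1 <o |T|" and "|S| \<le>o aleph1" and N: "\<And>x. x \<in> S \<Longrightarrow> countable (N x)"
  shows "\<exists>\<theta>\<in>T. \<forall>x\<in>S. \<theta> \<notin> N x"
proof -
  have "|\<Union>x\<in>S. N x| \<le>o aleph1"
    using assms(2) N countable_iff_ordLess_aleph1 ordLess_imp_ordLeq
    by (blast intro: card_of_UN_ordLeq_aleph1)
  then have "\<not> T \<subseteq> (\<Union>x\<in>S. N x)"
    using assms(1) card_of_mono1 ordLeq_transitive not_ordLess_ordLeq by blast
  then show ?thesis
    by blast
qed

lemma subset_UN_avoiders_if_uncountable:
  assumes N: "\<And>x. x \<in> S \<Longrightarrow> countable (N x)" and "\<not> countable D"
  shows "S \<subseteq> (\<Union>\<theta>\<in>D. {x\<in>S. \<theta> \<notin> N x})"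
proof
  fix x assume "x \<in> S"
  then have "\<not> D \<subseteq> N x"
    using N \<open>\<not> countable D\<close> countable_subset by blast
  then show "x \<in> (\<Union>\<theta>\<in>D. {x\<in>S. \<theta> \<notin> N x})"
    using \<open>x \<in> S\<close> by blast
qed

lemma countable_if_avoiders_ordLess:
  fixes S :: "'a set" and N :: "'a \<Rightarrow> 't set"
  defines "E \<theta> \<equiv> {x\<in>S. \<theta> \<notin> N x}"
  assumes N: "\<And>x. x \<in> S \<Longrightarrow> countable (N x)"
    and S: "aleph1 <o |S|" and small: "|E \<theta>\<^sub>0| <o |S|"
  shows "countable {\<theta>. |E \<theta>| \<le>o |E \<theta>\<^sub>0|}"
proof (rule ccontr)
  assume "\<not> ?thesis"
  then obtain D where D: "D \<subseteq> {\<theta>. |E \<theta>| \<le>o |E \<theta>\<^sub>0|}" "\<not> countable D" "|D| \<le>o aleph1"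
    by (rule ex_uncountable_subset_ordLeq_aleph1)
  have "|S| \<le>o |\<Union>\<theta>\<in>D. E \<theta>|"
    using subset_UN_avoiders_if_uncountable[of S N, OF N D(2)] unfolding E_def
    by (rule card_of_mono1)
  also have "|\<Union>\<theta>\<in>D. E \<theta>| \<le>o |D <+> E \<theta>\<^sub>0|"
  proof (rule card_of_UNION_ordLeq_infinite)
    show "\<not> finite (D <+> E \<theta>\<^sub>0)"
      using D(2) countable_finite by auto
    show "|D| \<le>o |D <+> E \<theta>\<^sub>0|"
      by (rule card_of_Plus1)
    show "\<forall>\<theta>\<in>D. |E \<theta>| \<le>o |D <+> E \<theta>\<^sub>0|"
      using D(1) card_of_Plus2 ordLeq_transitive by blast
  qed
  also have "|D <+> E \<theta>\<^sub>0| <o |S|"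
  proof (rule card_of_Plus_ordLess_infinite)
    show "\<not> finite S"
      using S uncountable_iff_aleph1_ordLeq ordLess_imp_ordLeq countable_finite by blast
    show "|D| <o |S|"
      using D(3) S by (rule ordLeq_ordLess_trans)
  qed (fact small)
  finally show False
    by (simp add: ordLess_irreflexive)
qed

(* If every {x\<in>S. \<theta> \<notin> N x} were smaller than S, ordering T by the sizes of these sets would
   give a total preorder with countable lower sets, forcing |T| \<le> aleph1. *)
lemma ex_point_avoided_by_equipotent_subset:
  assumes T: "aleph1 <o |T|" and N: "\<And>x. x \<in> S \<Longrightarrow> countable (N x)"
  shows "\<exists>\<theta>\<in>T. |{x\<in>S. \<theta> \<notin> N x}| =o |S|"
proof (rule ccontr)
  define E where "E \<theta> = {x\<in>S. \<theta> \<notin> N x}" for \<theta>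
  assume no_point: "\<not> ?thesis"
  have small: "|E \<theta>| <o |S|" if "\<theta> \<in> T" for \<theta>
  proof -
    have "|E \<theta>| \<le>o |S|"
      by (rule card_of_mono1) (auto simp: E_def)
    moreover have "\<not> |E \<theta>| =o |S|"
      using no_point that unfolding E_def by blast
    ultimately show ?thesis
      by (simp add: ordLeq_iff_ordLess_or_ordIso)
  qed
  have S: "aleph1 <o |S|"
  proof (rule ccontr)
    assume "\<not> aleph1 <o |S|"
    then have "|S| \<le>o aleph1"
      using not_ordLess_iff_ordLeq[OF card_of_Well_order cardSuc_Well_order[OF natLeq_Card_order]]
      by blast
    then obtain \<theta> where "\<theta> \<in> T" "E \<theta> = S"
      using ex_point_avoided_by_all_if_card_ordLeq_aleph1[of T S N] T N unfolding E_def by blast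
    then show False
      using small ordLess_irreflexive by metis
  qed
  have "countable {\<theta>\<in>T. |E \<theta>| \<le>o |E \<theta>\<^sub>0|}" if "\<theta>\<^sub>0 \<in> T" for \<theta>\<^sub>0
  proof (rule countable_subset)
    show "countable {\<theta>. |E \<theta>| \<le>o |E \<theta>\<^sub>0|}"
      unfolding E_def
      by (rule countable_if_avoiders_ordLess[of S N, OF N S small[OF that, unfolded E_def]])
  qed auto
  then have "|T| \<le>o aleph1"
    using ordLeq_total[OF card_of_Well_order card_of_Well_order]
    by (intro card_of_ordLeq_aleph1_if_countable_lower_sets[where R = "\<lambda>\<theta> \<theta>\<^sub>0. |E \<theta>| \<le>o |E \<theta>\<^sub>0|"])
  then show False
    using T not_ordLess_ordLeq by blast
qed

section \<open>Countably supported families of functionals\<close>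

lemma not_overcomplete_if_countably_supported_functionals:
  fixes f :: "'i \<Rightarrow> 'a::real_normed_vector \<Rightarrow> real" and S :: "'a set"
  assumes card: "aleph1 <o |T|"
    and linear: "\<And>t. t \<in> T \<Longrightarrow> bounded_linear (f t)"
    and nonzero: "\<And>t. t \<in> T \<Longrightarrow> \<exists>x. f t x \<noteq> 0"
    and support: "\<And>x. countable {t\<in>T. f t x \<noteq> 0}"
  shows "\<not> overcomplete S"
proof
  assume S: "overcomplete S"
  obtain t where t: "t \<in> T" and "|{x\<in>S. t \<notin> {t\<in>T. f t x \<noteq> 0}}| =o |S|"
    using ex_point_avoided_by_equipotent_subset[OF card, of S "\<lambda>x. {t\<in>T. f t x \<noteq> 0}"] support
    by blast
  moreover have "{x\<in>S. t \<notin> {t\<in>T. f t x \<noteq> 0}} = {x\<in>S. f t x = 0}"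
    using t by blast
  ultimately have "{x\<in>S. f t x = 0} \<approx> S"
    by (simp only: eqpoll_iff_card_of_ordIso)
  then have "closure (span {x\<in>S. f t x = 0}) = UNIV"
    using S by (simp add: overcomplete_def)
  moreover have "closure (span {x\<in>S. f t x = 0}) \<subseteq> {x. f t x = 0}"
  proof (intro closure_minimal span_minimal)
    show "subspace {x. f t x = 0}"
      using linear[OF t] by (simp add: bounded_linear.linear linear_subspace_kernel)
    show "closed {x. f t x = 0}"
      using linear[OF t] by (intro closed_Collect_eq linear_continuous_on continuous_on_const)
  qed auto
  ultimately show False
    using nonzero[OF t] by blast
qed

section \<open>An ultrafilter mean of Cesaro averages\<close>

definition ultrafilter :: "'a filter \<Rightarrow> bool" where
  "ultrafilter F \<longleftrightarrow> F \<noteq> bot \<and> (\<forall>P. eventually P F \<or> eventually (\<lambda>x. \<not> P x) F)"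

lemma Inf_chain_ne_bot:
  fixes C :: "'a filter set"
  assumes "C \<noteq> {}" and "\<And>F. F \<in> C \<Longrightarrow> F \<noteq> bot"
    and "\<And>F G. F \<in> C \<Longrightarrow> G \<in> C \<Longrightarrow> F \<le> G \<or> G \<le> F"
  shows "Inf C \<noteq> bot"
proof -
  have "eventually P (Inf C) \<longleftrightarrow> (\<exists>F\<in>C. eventually P F)" for P
    using assms(1,3) by (intro eventually_Inf_base) (auto simp: le_inf_iff)
  then show ?thesis
    using assms(2) by (auto simp flip: eventually_False)
qed

lemma ex_ultrafilter_le:
  fixes F :: "'a filter"
  assumes "F \<noteq> bot"
  shows "\<exists>U. ultrafilter U \<and> U \<le> F"
proof -
  define A where "A = {G. G \<noteq> bot \<and> G \<le> F}"
  have "partial_order_on A (relation_of (\<lambda>G H. H \<le> G) A)"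
    by (auto simp: partial_order_on_def preorder_on_def refl_on_def trans_on_def antisym_on_def
        relation_of_def)
  moreover have "\<exists>U\<in>A. \<forall>G\<in>C. U \<le> G" if C: "C \<in> Chains (relation_of (\<lambda>G H. H \<le> G) A)" for C
  proof (cases "C = {}")
    case True
    then show ?thesis
      using assms by (auto simp: A_def)
  next
    case False
    have C_A: "C \<subseteq> A" and C_total: "\<And>G H. G \<in> C \<Longrightarrow> H \<in> C \<Longrightarrow> G \<le> H \<or> H \<le> G"
      using C by (auto simp: Chains_def relation_of_def)
    then have "Inf C \<noteq> bot"
      using False by (intro Inf_chain_ne_bot) (auto simp: A_def)
    moreover have "Inf C \<le> F"
      using False C_A by (auto simp: A_def intro: Inf_lower2)
    ultimately show ?thesis
      by (auto simp: A_def intro!: bexI[of _ "Inf C"] Inf_lower)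
  qed
  ultimately obtain U where U: "U \<in> A" and minimal: "\<And>G. G \<in> A \<Longrightarrow> G \<le> U \<Longrightarrow> G = U"
    using predicate_Zorn[of A "\<lambda>G H. H \<le> G"] by blast
  have "eventually P U" if "\<not> eventually (\<lambda>x. \<not> P x) U" for P
  proof -
    let ?G = "inf U (principal {x. P x})"
    have "?G \<noteq> bot"
      using that by (simp add: eventually_inf_principal flip: eventually_False)
    then have "?G = U"
      using U by (intro minimal) (auto simp: A_def intro: le_infI1)
    moreover have "eventually P ?G"
      by (simp add: eventually_inf_principal)
    ultimately show ?thesis
      by simp
  qed
  then show ?thesis
    using U unfolding A_def ultrafilter_def by blast
qed

lemma ultrafilter_tendsto_compact:
  assumes U: "ultrafilter U" and "compact K" and K: "eventually (\<lambda>x. f x \<in> K) U"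
  shows "\<exists>L\<in>K. (f \<longlongrightarrow> L) U"
proof -
  have "filtermap f U \<noteq> bot"
    using U by (simp add: ultrafilter_def filtermap_bot_iff)
  then obtain L where "L \<in> K" and meet: "inf (nhds L) (filtermap f U) \<noteq> bot"
    using \<open>compact K\<close> K by (auto simp: compact_filter eventually_filtermap)
  have "eventually (\<lambda>x. P (f x)) U" if "eventually P (nhds L)" for P
  proof (rule ccontr)
    assume "\<not> eventually (\<lambda>x. P (f x)) U"
    then have "eventually (\<lambda>y. \<not> P y) (filtermap f U)"
      using U by (auto simp: ultrafilter_def eventually_filtermap)
    then have "eventually (\<lambda>_. False) (inf (nhds L) (filtermap f U))"
      using that by (auto simp: eventually_inf)
    then show False
      using meet by (simp add: eventually_False)
  qed
  then have "(f \<longlongrightarrow> L) U"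
    unfolding filterlim_def le_filter_def eventually_filtermap by blast
  then show ?thesis
    using \<open>L \<in> K\<close> by blast
qed

lemma Bseq_plus:
  fixes f g :: "nat \<Rightarrow> 'a::real_normed_vector"
  assumes "Bseq f" and "Bseq g"
  shows "Bseq (\<lambda>n. f n + g n)"
proof -
  obtain K L where "\<And>n. norm (f n) \<le> K" and "\<And>n. norm (g n) \<le> L"
    using assms by (meson BseqE)
  then have "norm (f n + g n) \<le> K + L" for n
    by (meson add_mono norm_triangle_ineq order_trans)
  then show ?thesis
    by (rule BseqI')
qed

lemma Bseq_sum:
  fixes f :: "'i \<Rightarrow> nat \<Rightarrow> 'a::real_normed_vector"
  shows "(\<And>i. i \<in> I \<Longrightarrow> Bseq (f i)) \<Longrightarrow> Bseq (\<lambda>n. \<Sum>i\<in>I. f i n)"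
  by (induction I rule: infinite_finite_induct) (auto intro: Bseq_plus)

definition free_ultrafilter :: "nat filter" where
  "free_ultrafilter = (SOME U. ultrafilter U \<and> U \<le> sequentially)"

lemma
  shows ultrafilter_free_ultrafilter: "ultrafilter free_ultrafilter"
    and free_ultrafilter_le_sequentially: "free_ultrafilter \<le> sequentially"
  using someI_ex[OF ex_ultrafilter_le[OF sequentially_bot]]
  unfolding free_ultrafilter_def by auto

lemma free_ultrafilter_ne_bot: "free_ultrafilter \<noteq> bot"
  using ultrafilter_free_ultrafilter by (simp add: ultrafilter_def)

definition cesaro :: "(nat \<Rightarrow> real) \<Rightarrow> nat \<Rightarrow> real" where
  "cesaro s n = (\<Sum>k\<le>n. s k) / real (Suc n)"

(* Taking Cesaro averages first is what makes mean (cos (a n)) vanish when sin (a/2) is nonzero;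
   the ultrafilter only makes the limit exist, and be linear, on all bounded sequences. *)
definition mean :: "(nat \<Rightarrow> real) \<Rightarrow> real" where
  "mean s = Lim free_ultrafilter (cesaro s)"

lemma abs_cesaro_le:
  assumes "\<And>n. \<bar>s n\<bar> \<le> B"
  shows "\<bar>cesaro s n\<bar> \<le> B"
proof -
  have "\<bar>\<Sum>k\<le>n. s k\<bar> \<le> (\<Sum>k\<le>n. B)"
    using assms by (intro order_trans[OF sum_abs sum_mono])
  then show ?thesis
    by (simp add: cesaro_def divide_le_eq mult.commute)
qed

lemma mean_eqI:
  assumes "(cesaro s \<longlongrightarrow> L) free_ultrafilter"
  shows "mean s = L"
  unfolding mean_def using free_ultrafilter_ne_bot assms by (simp add: tendsto_Lim)

lemma tendsto_mean:
  assumes "Bseq s"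
  shows "(cesaro s \<longlongrightarrow> mean s) free_ultrafilter"
proof -
  obtain B where "\<And>n. \<bar>s n\<bar> \<le> B"
    using assms by (metis BseqE real_norm_def)
  then have "cesaro s n \<in> {-B..B}" for n
    using abs_cesaro_le[of s B n] by (auto simp: abs_le_iff)
  then have "eventually (\<lambda>n. cesaro s n \<in> {-B..B}) free_ultrafilter"
    by simp
  then obtain L where "(cesaro s \<longlongrightarrow> L) free_ultrafilter"
    using ultrafilter_tendsto_compact[OF ultrafilter_free_ultrafilter] by blast
  with mean_eqI[OF this] show ?thesis
    by simp
qed

lemma mean_eqI_sequentially:
  assumes "(cesaro s \<longlongrightarrow> L) sequentially"
  shows "mean s = L"
  using filterlim_mono[OF assms order_refl free_ultrafilter_le_sequentially] by (rule mean_eqI)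

lemma mean_const: "mean (\<lambda>n. c) = c"
proof (rule mean_eqI_sequentially)
  have "cesaro (\<lambda>n. c) = (\<lambda>n. c)"
    by (auto simp: cesaro_def)
  then show "cesaro (\<lambda>n. c) \<longlonglongrightarrow> c"
    by simp
qed

lemma mean_add:
  assumes "Bseq s" and "Bseq t"
  shows "mean (\<lambda>n. s n + t n) = mean s + mean t"
proof -
  have "cesaro (\<lambda>n. s n + t n) = (\<lambda>n. cesaro s n + cesaro t n)"
    by (auto simp: cesaro_def sum.distrib add_divide_distrib)
  then have "(cesaro (\<lambda>n. s n + t n) \<longlongrightarrow> mean s + mean t) free_ultrafilter"
    using assms by (simp add: tendsto_add tendsto_mean)
  then show ?thesis
    by (rule mean_eqI)
qed

lemma mean_cmult:
  assumes "Bseq s"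
  shows "mean (\<lambda>n. c * s n) = c * mean s"
proof -
  have "cesaro (\<lambda>n. c * s n) = (\<lambda>n. c * cesaro s n)"
    by (auto simp: cesaro_def sum_distrib_left)
  then have "(cesaro (\<lambda>n. c * s n) \<longlongrightarrow> c * mean s) free_ultrafilter"
    using assms by (simp add: tendsto_mult tendsto_mean)
  then show ?thesis
    by (rule mean_eqI)
qed

lemma mean_sum:
  "(\<And>i. i \<in> I \<Longrightarrow> Bseq (f i)) \<Longrightarrow> mean (\<lambda>n. \<Sum>i\<in>I. f i n) = (\<Sum>i\<in>I. mean (f i))"
proof (induction I rule: infinite_finite_induct)
  case (insert i I)
  then show ?case
    by (simp add: mean_add Bseq_sum)
qed (simp_all add: mean_const)

lemma mean_nonneg:
  assumes "Bseq s" and "\<And>n. 0 \<le> s n"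
  shows "0 \<le> mean s"
proof (rule tendsto_lowerbound[OF tendsto_mean[OF assms(1)]])
  show "eventually (\<lambda>n. 0 \<le> cesaro s n) free_ultrafilter"
    using assms(2) by (simp add: cesaro_def sum_nonneg)
qed (fact free_ultrafilter_ne_bot)

lemma abs_mean_le:
  assumes "\<And>n. \<bar>s n\<bar> \<le> B"
  shows "\<bar>mean s\<bar> \<le> B"
proof (rule tendsto_upperbound[OF tendsto_rabs[OF tendsto_mean]])
  show "Bseq s"
    using assms by (intro BseqI'[of _ B]) simp
  show "eventually (\<lambda>n. \<bar>cesaro s n\<bar> \<le> B) free_ultrafilter"
    using assms abs_cesaro_le by simp
qed (fact free_ultrafilter_ne_bot)

section \<open>Orthogonality of cosines and Bessel's inequality\<close>

lemma cesaro_tendsto_zero: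
  assumes "\<And>n. \<bar>\<Sum>k\<le>n. s k\<bar> \<le> C"
  shows "cesaro s \<longlonglongrightarrow> 0"
proof (rule Lim_null_comparison)
  show "eventually (\<lambda>n. norm (cesaro s n) \<le> C * inverse (real (Suc n))) sequentially"
    using assms by (simp add: cesaro_def divide_right_mono flip: divide_inverse)
  show "(\<lambda>n. C * inverse (real (Suc n))) \<longlonglongrightarrow> 0"
    by (rule tendsto_mult_right_zero[OF LIMSEQ_inverse_real_of_nat])
qed

lemma Bseq_cos: "Bseq (\<lambda>n. cos (a * real n))"
  by (rule BseqI'[of _ 1]) simp

lemma sin_half_mult_sum_cos:
  "2 * sin (a/2) * (\<Sum>k\<le>n. cos (a * real k)) = sin ((real n + 1/2) * a) + sin (a/2)"
proof (induction n)
  case (Suc n)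
  have "2 * sin (a/2) * cos (a * real (Suc n))
      = sin ((real (Suc n) + 1/2) * a) - sin ((real n + 1/2) * a)"
    using sin_add[of "a * real (Suc n)" "a/2"] sin_diff[of "a * real (Suc n)" "a/2"]
    by (simp add: algebra_simps)
  with Suc show ?case
    by (simp add: algebra_simps)
qed simp

lemma mean_cos:
  assumes "sin (a/2) \<noteq> 0"
  shows "mean (\<lambda>n. cos (a * real n)) = 0"
proof (intro mean_eqI_sequentially cesaro_tendsto_zero)
  fix n
  let ?x = "(real n + 1/2) * a"
  have "\<bar>2 * sin (a/2) * (\<Sum>k\<le>n. cos (a * real k))\<bar> \<le> 2"
    unfolding sin_half_mult_sum_cos
    using abs_triangle_ineq[of "sin ?x" "sin (a/2)"] abs_sin_le_one[of ?x] abs_sin_le_one[of "a/2"]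
    by linarith
  then have "\<bar>sin (a/2)\<bar> * \<bar>\<Sum>k\<le>n. cos (a * real k)\<bar> \<le> 1"
    by (simp add: abs_mult)
  then show "\<bar>\<Sum>k\<le>n. cos (a * real k)\<bar> \<le> 1 / \<bar>sin (a/2)\<bar>"
    using assms by (simp add: field_simps)
qed

lemma mean_cos_mult_cos:
  assumes t: "t \<in> {0<..<pi}" and u: "u \<in> {0<..<pi}"
  shows "mean (\<lambda>n. cos (t * real n) * cos (u * real n)) = (if t = u then 1/2 else 0)"
proof -
  have "cos (t * real n) * cos (u * real n)
      = 1/2 * cos ((t - u) * real n) + 1/2 * cos ((t + u) * real n)" for n
    by (simp add: cos_times_cos algebra_simps)
  then have "mean (\<lambda>n. cos (t * real n) * cos (u * real n))
      = mean (\<lambda>n. 1/2 * cos ((t - u) * real n)) + mean (\<lambda>n. 1/2 * cos ((t + u) * real n))"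
    by (simp only:) (intro mean_add Bseq_mult Bfun_const Bseq_cos)
  also have "\<dots> = 1/2 * mean (\<lambda>n. cos ((t - u) * real n)) + 1/2 * mean (\<lambda>n. cos ((t + u) * real n))"
    by (simp only: mean_cmult[OF Bseq_cos])
  finally have "mean (\<lambda>n. cos (t * real n) * cos (u * real n))
      = 1/2 * mean (\<lambda>n. cos ((t - u) * real n)) + 1/2 * mean (\<lambda>n. cos ((t + u) * real n))" .
  moreover have "mean (\<lambda>n. cos ((t + u) * real n)) = 0"
    using t u sin_gt_zero[of "(t + u) / 2"] by (intro mean_cos) auto
  moreover have "mean (\<lambda>n. cos ((t - u) * real n)) = 0" if "t \<noteq> u"
    using t u that sin_eq_0_pi[of "(t - u) / 2"] by (intro mean_cos) auto
  ultimately show ?thesis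
    by (cases "t = u") (simp_all add: mean_const)
qed

lemma mean_mult_lincomb:
  assumes "Bseq s" and "\<And>t. t \<in> T \<Longrightarrow> Bseq (c t)"
  shows "mean (\<lambda>n. s n * (\<Sum>t\<in>T. a t * c t n)) = (\<Sum>t\<in>T. a t * mean (\<lambda>n. s n * c t n))"
proof -
  have "mean (\<lambda>n. s n * (\<Sum>t\<in>T. a t * c t n)) = mean (\<lambda>n. \<Sum>t\<in>T. a t * (s n * c t n))"
    by (simp add: sum_distrib_left mult.left_commute)
  also have "\<dots> = (\<Sum>t\<in>T. a t * mean (\<lambda>n. s n * c t n))"
    using assms by (simp add: mean_sum mean_cmult Bseq_mult)
  finally show ?thesis .
qed

lemma bessel_inequality_mean:
  fixes c :: "'i \<Rightarrow> nat \<Rightarrow> real"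
  assumes s: "Bseq s" and T: "finite T" and c: "\<And>t. t \<in> T \<Longrightarrow> Bseq (c t)"
    and orth: "\<And>t u. t \<in> T \<Longrightarrow> u \<in> T \<Longrightarrow> mean (\<lambda>n. c t n * c u n) = (if t = u then \<kappa> else 0)"
    and "\<kappa> > 0"
  shows "(\<Sum>t\<in>T. (mean (\<lambda>n. s n * c t n))\<^sup>2) \<le> \<kappa> * mean (\<lambda>n. (s n)\<^sup>2)"
proof -
  define a where "a t = mean (\<lambda>n. s n * c t n)" for t
  define y where "y n = (\<Sum>t\<in>T. a t * c t n)" for n
  have y: "Bseq y"
    unfolding y_def using c by (intro Bseq_sum Bseq_mult Bfun_const)
  have sy: "mean (\<lambda>n. s n * y n) = (\<Sum>t\<in>T. (a t)\<^sup>2)"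
    unfolding y_def using s c by (simp add: mean_mult_lincomb a_def power2_eq_square)
  have cy: "mean (\<lambda>n. y n * c t n) = \<kappa> * a t" if "t \<in> T" for t
  proof -
    have "mean (\<lambda>n. c t n * y n) = (\<Sum>u\<in>T. a u * (if t = u then \<kappa> else 0))"
      unfolding y_def using c that by (simp add: mean_mult_lincomb orth)
    also have "\<dots> = \<kappa> * a t"
      using T that by (simp add: if_distrib[of "(*) (a _)"] sum.delta' cong: if_cong)
    finally show ?thesis
      by (simp add: mult.commute)
  qed
  have yy: "mean (\<lambda>n. y n * y n) = \<kappa> * (\<Sum>t\<in>T. (a t)\<^sup>2)"
    using mean_mult_lincomb[where s = y and T = T and c = c and a = a, OF y c, folded y_def] cy
    by (simp add: sum_distrib_left power2_eq_square mult.left_commute)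
  have d: "Bseq (\<lambda>n. \<kappa> * s n - y n)"
    using Bseq_plus[OF Bseq_mult[OF Bfun_const s] iffD2[OF Bseq_minus_iff y]] by simp
  have "(\<kappa> * s n - y n)\<^sup>2 = \<kappa>\<^sup>2 * (s n * s n) + (- 2 * \<kappa>) * (s n * y n) + y n * y n" for n
    by (simp add: power2_eq_square algebra_simps)
  then have "mean (\<lambda>n. (\<kappa> * s n - y n)\<^sup>2)
      = \<kappa>\<^sup>2 * mean (\<lambda>n. s n * s n) + (- 2 * \<kappa>) * mean (\<lambda>n. s n * y n) + mean (\<lambda>n. y n * y n)"
    using s y by (simp only: mean_add mean_cmult Bseq_plus Bseq_mult Bfun_const)
  also have "\<dots> = \<kappa> * (\<kappa> * mean (\<lambda>n. (s n)\<^sup>2) - (\<Sum>t\<in>T. (a t)\<^sup>2))"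
    unfolding sy yy by (simp add: power2_eq_square algebra_simps)
  finally have "0 \<le> \<kappa> * (\<kappa> * mean (\<lambda>n. (s n)\<^sup>2) - (\<Sum>t\<in>T. (a t)\<^sup>2))"
    using mean_nonneg[of "\<lambda>n. (\<kappa> * s n - y n)\<^sup>2"] d
    by (simp add: power2_eq_square Bseq_mult)
  then show ?thesis
    using \<open>\<kappa> > 0\<close> by (simp add: a_def zero_le_mult_iff)
qed

lemma countable_nonzero_mean_coeffs:
  fixes c :: "'i \<Rightarrow> nat \<Rightarrow> real"
  assumes s: "Bseq s" and c: "\<And>t. t \<in> T \<Longrightarrow> Bseq (c t)"
    and orth: "\<And>t u. t \<in> T \<Longrightarrow> u \<in> T \<Longrightarrow> mean (\<lambda>n. c t n * c u n) = (if t = u then \<kappa> else 0)"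
    and "\<kappa> > 0"
  shows "countable {t\<in>T. mean (\<lambda>n. s n * c t n) \<noteq> 0}"
proof -
  let ?f = "\<lambda>t. (mean (\<lambda>n. s n * c t n))\<^sup>2"
  have "sum ?f F \<le> \<kappa> * mean (\<lambda>n. (s n)\<^sup>2)" if "F \<subseteq> T" "finite F" for F
    using that by (intro bessel_inequality_mean[OF s] c orth \<open>\<kappa> > 0\<close>) auto
  then have "?f summable_on T"
    by (intro nonneg_bdd_above_summable_on bdd_aboveI) auto
  then show ?thesis
    using summable_countable_real by fastforce
qed

section \<open>Cosine coefficients on l-infinity\<close>

definition cos_coeff :: "real \<Rightarrow> (nat \<Rightarrow>\<^sub>C real) \<Rightarrow> real" where
  "cos_coeff t x = mean (\<lambda>n. apply_bcontfun x n * cos (t * real n))"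

lemma Bseq_apply_bcontfun: "Bseq (apply_bcontfun (x :: nat \<Rightarrow>\<^sub>C 'a::real_normed_vector))"
  by (rule BseqI'[of _ "norm x"]) (rule norm_bounded)

lemma bounded_linear_cos_coeff: "bounded_linear (cos_coeff t)"
proof (rule bounded_linear_intro[where K = 1])
  show "cos_coeff t (x + y) = cos_coeff t x + cos_coeff t y" for x y
    unfolding cos_coeff_def
    by (simp add: distrib_right mean_add Bseq_mult Bseq_apply_bcontfun Bseq_cos)
  show "cos_coeff t (r *\<^sub>R x) = r *\<^sub>R cos_coeff t x" for r x
    unfolding cos_coeff_def
    by (simp add: mult.assoc mean_cmult Bseq_mult Bseq_apply_bcontfun Bseq_cos)
  show "norm (cos_coeff t x) \<le> norm x * 1" for x
    unfolding cos_coeff_def real_norm_def mult_1_right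
  proof (rule abs_mean_le)
    show "\<bar>apply_bcontfun x n * cos (t * real n)\<bar> \<le> norm x" for n
      using mult_mono[OF norm_bounded[of x n] abs_cos_le_one[of "t * real n"]]
      by (simp add: abs_mult)
  qed
qed

lemma countable_cos_coeff_nonzero: "countable {t\<in>{0<..<pi}. cos_coeff t x \<noteq> 0}"
  unfolding cos_coeff_def
  by (rule countable_nonzero_mean_coeffs[where \<kappa> = "1/2"])
    (simp_all add: Bseq_apply_bcontfun Bseq_cos mean_cos_mult_cos)

lemma cos_coeff_cos:
  assumes "t \<in> {0<..<pi}"
  shows "cos_coeff t (Bcontfun (\<lambda>n. cos (t * real n))) = 1/2"
proof -
  have "(\<lambda>n. cos (t * real n)) \<in> bcontfun"
    by (rule bcontfun_normI[where b = 1]) auto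
  then show ?thesis
    using mean_cos_mult_cos[OF assms assms] by (simp add: cos_coeff_def Bcontfun_inverse)
qed

lemma aleph1_ordLess_card_of_reals_if_not_CH:
  assumes "\<not> CH"
  shows "aleph1 <o |UNIV :: real set|"
proof -
  obtain A :: "real set" where "\<not> countable A" and "\<not> A \<approx> (UNIV :: real set)"
    using assms unfolding CH_def by blast
  then have "aleph1 \<le>o |A|" and "|A| <o |UNIV :: real set|"
    using card_of_mono1[OF subset_UNIV] ordLeq_iff_ordLess_or_ordIso eqpoll_iff_card_of_ordIso
      uncountable_iff_aleph1_ordLeq by blast+
  then show ?thesis
    by (rule ordLeq_ordLess_trans)
qed

theorem corollary3p8:
  assumes "\<not> CH"
  shows "\<not> (\<exists>S :: (nat \<Rightarrow>\<^sub>C real) set. overcomplete S)"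
proof -
  have "|UNIV :: real set| =o |{0<..<pi::real}|"
    using open_interval_eqpoll_reals[of 0 pi] eqpoll_sym by (simp add: eqpoll_iff_card_of_ordIso)
  with aleph1_ordLess_card_of_reals_if_not_CH[OF assms] have "aleph1 <o |{0<..<pi::real}|"
    by (rule ordLess_ordIso_trans)
  moreover have "\<exists>x. cos_coeff t x \<noteq> 0" if "t \<in> {0<..<pi}" for t
    using cos_coeff_cos[OF that] by (intro exI[of _ "Bcontfun (\<lambda>n. cos (t * real n))"]) simp
  ultimately show ?thesis
    using not_overcomplete_if_countably_supported_functionals[OF _ bounded_linear_cos_coeff _
        countable_cos_coeff_nonzero]
    by blast
qed

end
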